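(* Let $n,t\in\mathbb{N}$. Let $F$ be a $2$-regular graph on $n$ vertices all of whose cycles have length at least $30$. Let $n_1,\dots,n_t\in\mathbb{N}$ with $\sum_{i\in[t]}n_i=n$ and $n_i\ge50$ for all $i$. Then there exists $f:V(F)\to[t]$ such that (i) $|f^{-1}(i)|=n_i$ for all $i\in[t]$; (ii) $|f(x)-f(y)|\le1$ for all $xy\in E(F)$; (iii) the set $E$ of edges $xy\in E(F)$ with $f(x)\ne f(y)$ is an induced matching in $F$; (iv) for every $i\in[t-1]$ there are exactly four edges $xy\in E(F)$ with $\{f(x),f(y)\}=\{i,i+1\}$. *)

theory Defs
  imports Main
begin

definition simple_graph :: "'a set \<Rightarrow> 'a set set \<Rightarrow> bool" where
  "simple_graph V E \<longleftrightarrow> finite V \<and>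
     (\<forall>e\<in>E. \<exists>x y. x \<noteq> y \<and> x \<in> V \<and> y \<in> V \<and> e = {x, y})"

definition degree :: "'a set set \<Rightarrow> 'a \<Rightarrow> nat" where
  "degree E x = card {y. {x, y} \<in> E}"

definition two_regular :: "'a set \<Rightarrow> 'a set set \<Rightarrow> bool" where
  "two_regular V E \<longleftrightarrow> simple_graph V E \<and> (\<forall>x\<in>V. degree E x = 2)"

definition is_cycle :: "'a set \<Rightarrow> 'a set set \<Rightarrow> 'a list \<Rightarrow> bool" where
  "is_cycle V E cs \<longleftrightarrow> length cs \<ge> 3 \<and> distinct cs \<and> set cs \<subseteq> V \<and>
     (\<forall>i < length cs. {cs ! i, cs ! ((i + 1) mod length cs)} \<in> E)"

definition induced_matching :: "'a set set \<Rightarrow> 'a set set \<Rightarrow> bool" where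
  "induced_matching E M \<longleftrightarrow> M \<subseteq> E \<and>
     (\<forall>e\<in>M. \<forall>e'\<in>M. e \<noteq> e' \<longrightarrow> e \<inter> e' = {} \<and> (\<forall>x\<in>e. \<forall>y\<in>e'. {x, y} \<notin> E))"

end

theory Submission
  imports Defs
begin

text \<open>Each cycle of \<open>F\<close>, of length \<open>L \<ge> 30\<close>, is laid out on a block of \<open>L\<close> consecutive
  positions in the zigzag order \<open>v\<^sub>0, v\<^sub>L\<^sub>-\<^sub>1, v\<^sub>1, v\<^sub>L\<^sub>-\<^sub>2, \<dots>\<close>: cycle neighbours then lie at
  distance 2, except the first two and the last two positions of the block, which are adjacent.
  Placing the blocks side by side identifies \<open>F\<close> with a band graph on \<open>{0..<n}\<close>, in which a cut
  between \<open>c - 1\<close> and \<open>c\<close> more than 2 away from every block boundary (a clean cut) is crossed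
  by exactly the two edges \<open>(c - 2, c)\<close> and \<open>(c - 1, c + 1)\<close>.

  Part \<open>i\<close> is \<open>[A\<^sub>i\<^sub>-\<^sub>1, A\<^sub>i) \<union> [D\<^sub>i, D\<^sub>i\<^sub>-\<^sub>1)\<close>, where the nested intervals \<open>[A\<^sub>k, D\<^sub>k)\<close> have length
  \<open>n - (n\<^sub>1 + \<dots> + n\<^sub>k)\<close>, so parts \<open>i\<close> and \<open>i + 1\<close> meet exactly at the cuts \<open>A\<^sub>i\<close> and \<open>D\<^sub>i\<close>, which
  contribute four crossing edges. Each \<open>A\<^sub>k\<close> is \<open>A\<^sub>k\<^sub>-\<^sub>1\<close> plus 20, 25 or 30; since block boundaries
  are at least 30 apart, one of the three choices makes both \<open>A\<^sub>k\<close> and \<open>D\<^sub>k\<close> clean cuts, and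
  \<open>n\<^sub>k \<ge> 50\<close> keeps \<open>D\<^sub>k \<le> D\<^sub>k\<^sub>-\<^sub>1 - 20\<close>. Hence distinct cuts are at least 20 apart, so the
  crossing edges form an induced matching and the parts change by at most one along every edge.\<close>

section \<open>Two-regular graphs\<close>

lemma two_regular_edge:
  assumes "two_regular V E" "{x, y} \<in> E"
  shows "x \<in> V \<and> y \<in> V \<and> x \<noteq> y"
proof -
  obtain a b where "a \<noteq> b" "a \<in> V" "b \<in> V" "{x, y} = {a, b}"
    using assms unfolding two_regular_def simple_graph_def by blast
  then show ?thesis by (auto simp: doubleton_eq_iff)
qed

lemma two_regular_neighbours_card:
  assumes "two_regular V E" "x \<in> V"
  shows "finite {y. {x, y} \<in> E}" "card {y. {x, y} \<in> E} = 2"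
  using assms unfolding two_regular_def degree_def by (auto intro: card_ge_0_finite)

lemma two_regular_third_neighbour:
  assumes "two_regular V E" "x \<in> V" "{x, a} \<in> E" "{x, b} \<in> E" "a \<noteq> b" "{x, y} \<in> E"
  shows "y = a \<or> y = b"
proof (rule ccontr)
  assume y: "\<not> (y = a \<or> y = b)"
  have "card {a, b, y} \<le> card {y. {x, y} \<in> E}"
    using assms by (intro card_mono two_regular_neighbours_card) auto
  then show False
    using y assms two_regular_neighbours_card[OF assms(1,2)] by auto
qed

lemma two_regular_other_neighbour:
  assumes "two_regular V E" "x \<in> V"
  obtains u where "{x, u} \<in> E" "u \<noteq> a"
proof -
  have "\<not> {y. {x, y} \<in> E} \<subseteq> {a}"
    using card_mono[of "{a}" "{y. {x, y} \<in> E}"] two_regular_neighbours_card[OF assms] by auto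
  then show ?thesis using that by blast
qed

lemma cycle_neighbour:
  assumes "two_regular V E" "is_cycle V E cs" "j < length cs" "{cs ! j, z} \<in> E"
  shows "\<exists>k < length cs. {cs ! j, z} = {cs ! k, cs ! ((k + 1) mod length cs)}"
proof -
  let ?L = "length cs" and ?next = "\<lambda>k. (k + 1) mod length cs"
  have L: "3 \<le> ?L" and dist: "distinct cs" and xV: "cs ! j \<in> V"
    and edge: "\<And>k. k < ?L \<Longrightarrow> {cs ! k, cs ! ?next k} \<in> E"
    using assms(2,3) unfolding is_cycle_def by auto
  define i where "i = (if j = 0 then ?L - 1 else j - 1)"
  have i: "i < ?L" "?next i = j"
    using L assms(3) unfolding i_def by auto
  have "i \<noteq> ?next j"
    using L assms(3) unfolding i_def by (auto simp: mod_if)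
  moreover have "?next j < ?L"
    using L by (intro mod_less_divisor) linarith
  ultimately have "cs ! ?next j \<noteq> cs ! i"
    using dist i(1) by (simp add: nth_eq_iff_index_eq)
  moreover have "{cs ! j, cs ! i} \<in> E"
    using edge[OF i(1)] i(2) by (simp add: insert_commute)
  ultimately have "z = cs ! ?next j \<or> z = cs ! i"
    using two_regular_third_neighbour[OF assms(1) xV edge[OF assms(3)]] assms(4) by blast
  then show ?thesis
    using i assms(3) by (auto simp: insert_commute)
qed

lemma cycle_closed:
  assumes "two_regular V E" "is_cycle V E cs" "x \<in> set cs" "{x, z} \<in> E"
  shows "z \<in> set cs"
proof -
  obtain j where j: "j < length cs" "x = cs ! j"
    using assms(3) by (auto simp: in_set_conv_nth)
  then obtain k where k: "k < length cs" "{x, z} = {cs ! k, cs ! ((k + 1) mod length cs)}"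
    using cycle_neighbour[OF assms(1,2)] assms(4) by blast
  moreover have "(k + 1) mod length cs < length cs"
    using k(1) by (intro mod_less_divisor) linarith
  ultimately show ?thesis
    by (auto simp: doubleton_eq_iff)
qed

lemma edges_meeting_cycle:
  assumes "two_regular V E" "is_cycle V E cs"
  shows "{e \<in> E. e \<inter> set cs \<noteq> {}} = (\<lambda>k. {cs ! k, cs ! ((k + 1) mod length cs)}) ` {..<length cs}"
proof (intro set_eqI iffI)
  fix e assume e: "e \<in> {e \<in> E. e \<inter> set cs \<noteq> {}}"
  obtain x y where "e = {x, y}"
    using e assms(1) unfolding two_regular_def simple_graph_def by blast
  with e obtain u w where uw: "e = {u, w}" "u \<in> set cs"
    by (auto simp: insert_commute)
  then obtain j where "j < length cs" "u = cs ! j"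
    by (auto simp: in_set_conv_nth)
  then show "e \<in> (\<lambda>k. {cs ! k, cs ! ((k + 1) mod length cs)}) ` {..<length cs}"
    using cycle_neighbour[OF assms, of j w] e uw by auto
next
  fix e assume "e \<in> (\<lambda>k. {cs ! k, cs ! ((k + 1) mod length cs)}) ` {..<length cs}"
  then show "e \<in> {e \<in> E. e \<inter> set cs \<noteq> {}}"
    using assms(2) unfolding is_cycle_def by auto
qed

lemma two_regular_remove_cycle:
  assumes "two_regular V E" "is_cycle V E cs"
  shows "two_regular (V - set cs) {e \<in> E. e \<inter> set cs = {}}"
  unfolding two_regular_def
proof (intro conjI ballI)
  show "simple_graph (V - set cs) {e \<in> E. e \<inter> set cs = {}}"
    unfolding simple_graph_def
  proof (intro conjI ballI)
    show "finite (V - set cs)"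
      using assms(1) unfolding two_regular_def simple_graph_def by simp
  next
    fix e assume e: "e \<in> {e \<in> E. e \<inter> set cs = {}}"
    then have "e \<in> E" by simp
    then obtain x y where "x \<noteq> y" "x \<in> V" "y \<in> V" "e = {x, y}"
      using assms(1) unfolding two_regular_def simple_graph_def by blast
    moreover have "x \<notin> set cs" "y \<notin> set cs"
      using e \<open>e = {x, y}\<close> by auto
    ultimately show "\<exists>x y. x \<noteq> y \<and> x \<in> V - set cs \<and> y \<in> V - set cs \<and> e = {x, y}"
      by blast
  qed
next
  fix x assume x: "x \<in> V - set cs"
  have "{y. {x, y} \<in> {e \<in> E. e \<inter> set cs = {}}} = {y. {x, y} \<in> E}"
  proof (intro set_eqI iffI)
    fix y assume y: "y \<in> {y. {x, y} \<in> E}"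
    then have "{y, x} \<in> E" by (simp add: insert_commute)
    then have "y \<notin> set cs" using cycle_closed[OF assms, of y x] x by blast
    then show "y \<in> {y. {x, y} \<in> {e \<in> E. e \<inter> set cs = {}}}" using x y by auto
  qed auto
  then show "degree {e \<in> E. e \<inter> set cs = {}} x = 2"
    using assms(1) x unfolding two_regular_def degree_def by auto
qed

definition is_path :: "'a set \<Rightarrow> 'a set set \<Rightarrow> 'a list \<Rightarrow> bool" where
  "is_path V E p \<longleftrightarrow> distinct p \<and> set p \<subseteq> V \<and> (\<forall>i. Suc i < length p \<longrightarrow> {p ! i, p ! Suc i} \<in> E)"

lemma is_path_snoc:
  assumes "is_path V E p" "p \<noteq> []" "u \<in> V" "u \<notin> set p" "{last p, u} \<in> E"
  shows "is_path V E (p @ [u])"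
  unfolding is_path_def
proof (intro conjI allI impI)
  fix i assume i: "Suc i < length (p @ [u])"
  show "{(p @ [u]) ! i, (p @ [u]) ! Suc i} \<in> E"
  proof (cases "Suc i < length p")
    case True
    then show ?thesis using assms(1) unfolding is_path_def by (simp add: nth_append)
  next
    case False
    then have "i = length p - 1" using i by simp
    then show ?thesis using assms(2,5) by (simp add: nth_append last_conv_nth)
  qed
qed (use assms in \<open>auto simp: is_path_def\<close>)

lemma path_interior_neighbour:
  assumes tr: "two_regular V E" and p: "is_path V E p" and i: "0 < i" "i + 1 < length p"
    and x: "{p ! i, x} \<in> E"
  shows "x = p ! (i - 1) \<or> x = p ! (i + 1)"
proof -
  have dist: "distinct p" and sub: "set p \<subseteq> V"
    and edge: "\<And>k. Suc k < length p \<Longrightarrow> {p ! k, p ! Suc k} \<in> E"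
    using p unfolding is_path_def by auto
  have "p ! i \<in> V" using sub nth_mem[of i p] i(2) by auto
  moreover have "{p ! i, p ! (i - 1)} \<in> E"
    using edge[of "i - 1"] i by (simp add: insert_commute)
  moreover have "{p ! i, p ! (i + 1)} \<in> E"
    using edge[of i] i by simp
  moreover have "p ! (i - 1) \<noteq> p ! (i + 1)"
    using dist i by (simp add: nth_eq_iff_index_eq)
  ultimately show ?thesis
    using two_regular_third_neighbour[OF tr _ _ _ _ x] by blast
qed

lemma longest_path_closes:
  assumes tr: "two_regular V E" and p: "is_path V E p" and p3: "3 \<le> length p"
    and longest: "\<And>q. is_path V E q \<Longrightarrow> length q \<le> length p"
  shows "{last p, p ! 0} \<in> E"
proof -
  let ?m = "length p"
  have dist: "distinct p" and sub: "set p \<subseteq> V"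
    using p unfolding is_path_def by auto
  have ne: "p \<noteq> []" using p3 by (cases p) auto
  then have x: "last p = p ! (?m - 1)" "last p \<in> V"
    using sub by (auto simp: last_conv_nth)
  obtain u where u: "{last p, u} \<in> E" "u \<noteq> p ! (?m - 2)"
    using two_regular_other_neighbour[OF tr x(2)] by blast
  have "u \<in> set p"
  proof (rule ccontr)
    assume "u \<notin> set p"
    moreover have "u \<in> V" using two_regular_edge[OF tr u(1)] by blast
    ultimately have "is_path V E (p @ [u])" using is_path_snoc[OF p ne _ _ u(1)] by blast
    then show False using longest[of "p @ [u]"] by simp
  qed
  then obtain i where i: "i < ?m" "u = p ! i"
    unfolding in_set_conv_nth by blast
  have "u \<noteq> last p" using two_regular_edge[OF tr u(1)] by blast
  then have "i \<noteq> ?m - 1" using i x(1) by auto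
  moreover have "i \<noteq> ?m - 2" using u(2) i by auto
  ultimately have "i + 2 < ?m" using i(1) by linarith
  have "i = 0"
  proof (rule ccontr)
    assume "i \<noteq> 0"
    then have "last p = p ! (i - 1) \<or> last p = p ! (i + 1)"
      using path_interior_neighbour[OF tr p, of i "last p"] \<open>i + 2 < ?m\<close> u(1) i(2)
      by (simp add: insert_commute)
    moreover have "last p \<noteq> p ! (i - 1)" "last p \<noteq> p ! (i + 1)"
      using dist \<open>i + 2 < ?m\<close> unfolding x(1) by (simp_all add: nth_eq_iff_index_eq)
    ultimately show False by blast
  qed
  then show ?thesis using u(1) i(2) by simp
qed

lemma longest_path_is_cycle:
  assumes tr: "two_regular V E" and p: "is_path V E p" and p3: "3 \<le> length p"
    and longest: "\<And>q. is_path V E q \<Longrightarrow> length q \<le> length p"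
  shows "is_cycle V E p"
  unfolding is_cycle_def
proof (intro conjI allI impI)
  fix k assume k: "k < length p"
  show "{p ! k, p ! ((k + 1) mod length p)} \<in> E"
  proof (cases "Suc k < length p")
    case True
    then show ?thesis using p unfolding is_path_def by simp
  next
    case False
    then have "k = length p - 1" "p \<noteq> []" using k by auto
    then show ?thesis using longest_path_closes[OF assms] by (simp add: last_conv_nth)
  qed
qed (use p p3 in \<open>auto simp: is_path_def\<close>)

lemma two_regular_has_cycle:
  assumes tr: "two_regular V E" and "V \<noteq> {}"
  obtains cs where "is_cycle V E cs"
proof -
  have finV: "finite V" using tr unfolding two_regular_def simple_graph_def by auto
  obtain v where v: "v \<in> V" using assms(2) by auto
  obtain a where a: "{v, a} \<in> E"
    using two_regular_other_neighbour[OF tr v] by blast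
  obtain b where b: "{v, b} \<in> E" "b \<noteq> a"
    using two_regular_other_neighbour[OF tr v] by blast
  have path: "is_path V E [a, v, b]"
    unfolding is_path_def
  proof (intro conjI allI impI)
    fix i assume "Suc i < length [a, v, b]"
    then have "i = 0 \<or> i = 1" by auto
    then show "{[a, v, b] ! i, [a, v, b] ! Suc i} \<in> E"
      using a b(1) by (auto simp: insert_commute)
  qed (use two_regular_edge[OF tr a] two_regular_edge[OF tr b(1)] b(2) in auto)
  have bounded: "\<forall>q. is_path V E q \<longrightarrow> length q < Suc (card V)"
  proof (intro allI impI)
    fix q assume "is_path V E q"
    then have "distinct q" "set q \<subseteq> V" unfolding is_path_def by auto
    then show "length q < Suc (card V)"
      using card_mono[OF finV] distinct_card by (metis le_imp_less_Suc)
  qed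
  obtain p where "is_path V E p" and longest: "\<And>q. is_path V E q \<Longrightarrow> length q \<le> length p"
    using ex_has_greatest_nat[OF path bounded] by blast
  moreover have "3 \<le> length p"
    using longest[OF path] by simp
  ultimately show ?thesis
    using longest_path_is_cycle[OF tr] that by blast
qed

section \<open>Band graphs\<close>

text \<open>The elements of \<open>S\<close> delimit blocks of positions; within a block, \<open>a\<close> and \<open>a + 2\<close> are
  adjacent, and so are the first two and the last two positions of the block.\<close>
definition band :: "nat set \<Rightarrow> nat \<Rightarrow> (nat \<times> nat) set" where
  "band S n = {(a, b). b < n \<and>
     (b = a + 2 \<and> a + 1 \<notin> S \<and> a + 2 \<notin> S \<or> b = a + 1 \<and> (a \<in> S \<or> a + 2 \<in> S))}"

lemma band_less:
  assumes "(a, b) \<in> band S n"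
  shows "a < b" "b \<le> a + 2" "b < n"
  using assms unfolding band_def by auto

lemma band_single_block:
  "(a, b) \<in> band {0, L} L \<longleftrightarrow> b < L \<and> (b = a + 2 \<or> b = a + 1 \<and> (a = 0 \<or> a + 2 = L))"
  unfolding band_def by auto

lemma mem_insert_shift: "(x :: nat) \<in> insert 0 ((+) L ` S) \<longleftrightarrow> x = 0 \<or> L \<le> x \<and> x - L \<in> S"
proof -
  have "x \<in> (+) L ` S \<longleftrightarrow> L \<le> x \<and> x - L \<in> S"
  proof
    assume "x \<in> (+) L ` S"
    then show "L \<le> x \<and> x - L \<in> S" by auto
  next
    assume x: "L \<le> x \<and> x - L \<in> S"
    then have "x = L + (x - L)" by simp
    then show "x \<in> (+) L ` S" using x by blast
  qed
  then show ?thesis by simp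
qed

lemma band_prepend_block_first:
  assumes "0 \<in> S" "b < L"
  shows "(a, b) \<in> band (insert 0 ((+) L ` S)) (L + n) \<longleftrightarrow> (a, b) \<in> band {0, L} L"
  using assms unfolding band_def mem_insert_shift by (cases "a + 2 = L") auto

lemma band_prepend_block_shifted:
  assumes "1 \<le> L"
  shows "(L + a, L + b) \<in> band (insert 0 ((+) L ` S)) (L + n) \<longleftrightarrow> (a, b) \<in> band S n"
  using assms unfolding band_def mem_insert_shift by (simp add: add.assoc)

lemma band_prepend_block_straddle:
  assumes "0 \<in> S" "1 \<notin> S" "2 \<le> L" "a < L" "L \<le> b"
  shows "(a, b) \<notin> band (insert 0 ((+) L ` S)) (L + n)"
proof
  assume ab: "(a, b) \<in> band (insert 0 ((+) L ` S)) (L + n)"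
  then have "b = a + 2 \<and> (a + 1 = L \<or> a + 2 = L) \<or> a = L - 1 \<and> b = L"
    using band_less[OF ab] assms(4,5) by linarith
  then show False
    using ab assms(1-3) unfolding band_def mem_insert_shift by auto
qed

lemma band_prepend_block:
  assumes "0 \<in> S" "1 \<notin> S" "2 \<le> L"
  shows "band (insert 0 ((+) L ` S)) (L + n) = band {0, L} L \<union> (\<lambda>(a, b). (L + a, L + b)) ` band S n"
proof (intro set_eqI iffI)
  fix x assume x: "x \<in> band (insert 0 ((+) L ` S)) (L + n)"
  obtain a b where ab: "x = (a, b)" by fastforce
  show "x \<in> band {0, L} L \<union> (\<lambda>(a, b). (L + a, L + b)) ` band S n"
  proof (cases "b < L")
    case True
    then show ?thesis using x band_prepend_block_first[OF assms(1)] unfolding ab by simp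
  next
    case False
    then have "\<not> a < L" using x band_prepend_block_straddle[OF assms, of a b n] unfolding ab by auto
    then have "L \<le> a" by simp
    then have "x = (L + (a - L), L + (b - L))" "(a - L, b - L) \<in> band S n"
      using x band_prepend_block_shifted[where L = L and a = "a - L" and b = "b - L" and S = S and n = n]
        band_less(1)[of a b] False assms(3)
      unfolding ab by auto
    then show ?thesis
      using rev_image_eqI[of "(a - L, b - L)" "band S n" x "\<lambda>(a, b). (L + a, L + b)"] by simp
  qed
next
  fix x assume "x \<in> band {0, L} L \<union> (\<lambda>(a, b). (L + a, L + b)) ` band S n"
  then show "x \<in> band (insert 0 ((+) L ` S)) (L + n)"
    using band_prepend_block_first[OF assms(1)] band_prepend_block_shifted[of L] band_less(3) assms(3)
    by (cases x) auto
qed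

definition spread :: "nat \<Rightarrow> nat set \<Rightarrow> bool" where
  "spread d S \<longleftrightarrow> (\<forall>s\<in>S. \<forall>s'\<in>S. s < s' \<longrightarrow> s + d \<le> s')"

lemma spread_mono: "d \<le> d' \<Longrightarrow> spread d' S \<Longrightarrow> spread d S"
  unfolding spread_def by fastforce

lemma spread_insert_shift:
  assumes "spread d S" "d \<le> L"
  shows "spread d (insert 0 ((+) L ` S))"
  using assms unfolding spread_def by fastforce

definition clean_cut :: "nat set \<Rightarrow> nat \<Rightarrow> bool" where
  "clean_cut S c \<longleftrightarrow> (\<forall>s\<in>S. s + 2 < c \<or> c + 2 < s)"

lemma clean_cut_bounds:
  assumes "0 \<in> S" "n \<in> S" "clean_cut S c" "c \<le> n"
  shows "3 \<le> c" "c + 3 \<le> n"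
  using assms unfolding clean_cut_def by force+

lemma band_at_clean_cut:
  assumes "0 \<in> S" "n \<in> S" "clean_cut S c" "c \<le> n"
  shows "(c - 2, c) \<in> band S n" "(c - 1, c + 1) \<in> band S n"
    and "(c - 2, c - 1) \<notin> band S n" "(c - 1, c) \<notin> band S n" "(c, c + 1) \<notin> band S n"
proof -
  define d where "d = c - 3"
  have d: "c = d + 3" "d + 6 \<le> n"
    using clean_cut_bounds[OF assms] unfolding d_def by linarith+
  have "d + k \<notin> S" if "1 \<le> k" "k \<le> 5" for k
    using assms(3) that unfolding clean_cut_def d by force
  from this[of 1] this[of 2] this[of 3] this[of 4] this[of 5]
  show "(c - 2, c) \<in> band S n" "(c - 1, c + 1) \<in> band S n"
    and "(c - 2, c - 1) \<notin> band S n" "(c - 1, c) \<notin> band S n" "(c, c + 1) \<notin> band S n"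
    using d unfolding band_def by (simp_all add: eval_nat_numeral)
qed

lemma band_at_clean_cut_separated:
  assumes "0 \<in> S" "n \<in> S" "clean_cut S c" "c \<le> n" "p \<in> {c - 2, c}" "q \<in> {c - 1, c + 1}"
  shows "(p, q) \<notin> band S n \<and> (q, p) \<notin> band S n"
proof -
  have "3 \<le> c" using clean_cut_bounds[OF assms(1-4)] by simp
  then show ?thesis
    using assms(5,6) band_at_clean_cut(3-5)[OF assms(1-4)] band_less(1,2)[of _ _ S n] by fastforce
qed

lemma band_crossing_clean_cut:
  assumes "0 \<in> S" "n \<in> S" "clean_cut S c" "c \<le> n" "(a, b) \<in> band S n" "a < c" "c \<le> b"
  shows "(a, b) = (c - 2, c) \<or> (a, b) = (c - 1, c + 1)"
proof -
  have "(a, b) = (c - 2, c) \<or> (a, b) = (c - 1, c) \<or> (a, b) = (c - 1, c + 1)"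
    using band_less[OF assms(5)] assms(6,7) by auto
  then show ?thesis
    using band_at_clean_cut(4)[OF assms(1-4)] assms(5) by auto
qed

lemma clean_cut_one_of_two:
  assumes "spread d S" "15 \<le> d" "c + 5 \<le> c'" "c' \<le> c + 10"
  shows "clean_cut S c \<or> clean_cut S c'"
proof (rule ccontr)
  assume "\<not> ?thesis"
  then obtain s s' where s: "s \<in> S" "s' \<in> S" "c \<le> s + 2" "s \<le> c + 2" "c' \<le> s' + 2" "s' \<le> c' + 2"
    unfolding clean_cut_def by (auto simp: not_less)
  then have "s < s'" using assms(3) by linarith
  then have "s + d \<le> s'" using assms(1) s(1,2) unfolding spread_def by blast
  then show False using s assms(2-4) by linarith
qed

text \<open>Three candidates, pairwise 5 to 10 apart, for two cuts at fixed distance D: at most one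
  candidate is spoiled for each of the two cuts.\<close>
lemma clean_cut_choice:
  assumes "spread d S" "15 \<le> d"
  shows "\<exists>c \<in> {m + 20, m + 25, m + 30}. clean_cut S c \<and> clean_cut S (c + D)"
proof -
  have "clean_cut S (m + 20) \<or> clean_cut S (m + 25)" "clean_cut S (m + 20) \<or> clean_cut S (m + 30)"
    "clean_cut S (m + 25) \<or> clean_cut S (m + 30)"
    "clean_cut S (m + 20 + D) \<or> clean_cut S (m + 25 + D)"
    "clean_cut S (m + 20 + D) \<or> clean_cut S (m + 30 + D)"
    "clean_cut S (m + 25 + D) \<or> clean_cut S (m + 30 + D)"
    by (rule clean_cut_one_of_two[OF assms]; simp)+
  then show ?thesis by blast
qed

definition zigzag :: "nat \<Rightarrow> nat \<Rightarrow> nat" where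
  "zigzag L k = (if even k then k div 2 else L - 1 - k div 2)"

lemma zigzag_even: "zigzag L (2 * q) = q"
  unfolding zigzag_def by simp

lemma zigzag_odd: "zigzag L (2 * q + 1) = L - 1 - q"
  unfolding zigzag_def by simp

lemma zigzag_bij: "bij_betw (zigzag L) {..<L} {..<L}"
proof -
  have "inj_on (zigzag L) {..<L}"
  proof (rule inj_onI)
    fix a b assume ab: "a \<in> {..<L}" "b \<in> {..<L}" "zigzag L a = zigzag L b"
    obtain q r where "a = 2 * q \<or> a = 2 * q + 1" "b = 2 * r \<or> b = 2 * r + 1"
      by (metis evenE oddE)
    then show "a = b"
      using ab by (elim disjE; simp add: zigzag_even zigzag_odd[simplified]; arith?)
  qed
  moreover have "zigzag L ` {..<L} \<subseteq> {..<L}"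
    unfolding zigzag_def using div_le_dividend[of _ 2] by fastforce
  ultimately show ?thesis
    unfolding bij_betw_def using endo_inj_surj[of "{..<L}"] by blast
qed

lemma zigzag_band_edge:
  assumes "3 \<le> L" "(a, b) \<in> band {0, L} L"
  shows "\<exists>j<L. {zigzag L a, zigzag L b} = {j, (j + 1) mod L}"
proof -
  have ab: "b < L" "b = a + 2 \<or> b = a + 1 \<and> (a = 0 \<or> a + 2 = L)"
    using assms(2) unfolding band_single_block by auto
  obtain q where q: "a = 2 * q \<or> a = 2 * q + 1" by (metis evenE oddE)
  consider "b = a + 2" "a = 2 * q" | "b = a + 2" "a = 2 * q + 1" | "b = a + 1" "a = 0"
    | "b = a + 1" "a + 2 = L" "a = 2 * q" | "b = a + 1" "a + 2 = L" "a = 2 * q + 1" "a \<noteq> 0"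
    using ab q by blast
  then show ?thesis
  proof cases
    case 1
    then have "zigzag L a = q" "zigzag L b = q + 1" "q + 1 < L"
      using zigzag_even[of L q] zigzag_even[of L "q + 1"] ab(1) by simp_all
    then show ?thesis by (intro exI[of _ q]) simp
  next
    case 2
    have L: "L - 1 - q = (L - 2 - q) + 1" "L - 1 - (q + 1) = L - 2 - q" "L - 2 - q + 1 < L"
      using ab(1) 2 by arith+
    have "b = 2 * (q + 1) + 1" using 2 by simp
    then have "zigzag L a = (L - 2 - q) + 1" "zigzag L b = L - 2 - q"
      using zigzag_odd[of L q] zigzag_odd[of L "q + 1"] 2 L by simp_all
    then show ?thesis using L by (intro exI[of _ "L - 2 - q"]) auto
  next
    case 3
    have "zigzag L 0 = 0" "zigzag L 1 = L - 1" "(L - 1 + 1) mod L = 0"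
      using zigzag_even[of L 0] zigzag_odd[of L 0] assms(1) by simp_all
    then show ?thesis using 3 assms(1) by (intro exI[of _ "L - 1"]) auto
  next
    case 4
    have "b = 2 * q + 1" using 4 by simp
    then have "zigzag L a = q" "zigzag L b = q + 1" "q + 1 < L"
      using zigzag_even[of L q] zigzag_odd[of L q] 4 by simp_all
    then show ?thesis by (intro exI[of _ q]) simp
  next
    case 5
    have "b = 2 * (q + 1)" using 5 by simp
    then have "zigzag L a = q + 2" "zigzag L b = q + 1" "q + 2 < L"
      using zigzag_even[of L "q + 1"] zigzag_odd[of L q] 5 by simp_all
    then show ?thesis by (intro exI[of _ "q + 1"]) auto
  qed
qed

lemma zigzag_cycle_edge:
  assumes "3 \<le> L" "j < L"
  shows "\<exists>a b. (a, b) \<in> band {0, L} L \<and> {zigzag L a, zigzag L b} = {j, (j + 1) mod L}"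
proof -
  consider "j + 1 = L" | "j + 1 < L" "2 * j + 2 < L" | "j + 1 < L" "L \<le> 2 * j"
    | "L = 2 * j + 2" | "L = 2 * j + 1" "1 \<le> j"
    using assms by linarith
  then show ?thesis
  proof cases
    case 1
    have "zigzag L 0 = 0" "zigzag L 1 = L - 1"
      using zigzag_even[of L 0] zigzag_odd[of L 0] by simp_all
    then show ?thesis
      using assms 1 by (intro exI[of _ 0] exI[of _ 1]) (auto simp: band_single_block)
  next
    case 2
    have "zigzag L (2 * j) = j" "zigzag L (2 * (j + 1)) = j + 1" by (rule zigzag_even)+
    then show ?thesis
      using 2 by (intro exI[of _ "2 * j"] exI[of _ "2 * (j + 1)"]) (auto simp: band_single_block)
  next
    case 3
    define q where "q = L - 2 - j"
    have q: "L - 1 - q = j + 1" "L - 1 - (q + 1) = j" "2 * (q + 1) + 1 < L"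
      "2 * (q + 1) + 1 = (2 * q + 1) + 2"
      using assms 3 unfolding q_def by arith+
    have "zigzag L (2 * q + 1) = j + 1" "zigzag L (2 * (q + 1) + 1) = j"
      using zigzag_odd[of L q] zigzag_odd[of L "q + 1"] q by simp_all
    then show ?thesis
      using 3 q by (intro exI[of _ "2 * q + 1"] exI[of _ "2 * (q + 1) + 1"]) (auto simp: band_single_block)
  next
    case 4
    have "zigzag L (2 * j) = j" "zigzag L (2 * j + 1) = j + 1"
      using zigzag_even[of L j] zigzag_odd[of L j] 4 by simp_all
    then show ?thesis
      using 4 by (intro exI[of _ "2 * j"] exI[of _ "2 * j + 1"]) (auto simp: band_single_block)
  next
    case 5
    have "zigzag L (2 * (j - 1) + 1) = j + 1" "zigzag L (2 * j) = j" "2 * (j - 1) + 1 + 1 = 2 * j"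
      using zigzag_odd[of L "j - 1"] zigzag_even[of L j] 5 by simp_all
    then show ?thesis
      using 5 by (intro exI[of _ "2 * (j - 1) + 1"] exI[of _ "2 * j"]) (auto simp: band_single_block)
  qed
qed

lemma zigzag_band:
  assumes "3 \<le> L"
  shows "(\<lambda>(a, b). {zigzag L a, zigzag L b}) ` band {0, L} L = (\<lambda>j. {j, (j + 1) mod L}) ` {..<L}"
proof (intro set_eqI iffI)
  fix e assume "e \<in> (\<lambda>(a, b). {zigzag L a, zigzag L b}) ` band {0, L} L"
  then obtain a b where "(a, b) \<in> band {0, L} L" "e = {zigzag L a, zigzag L b}" by auto
  then obtain j where "j < L" "e = {j, (j + 1) mod L}"
    using zigzag_band_edge[OF assms] by blast
  then show "e \<in> (\<lambda>j. {j, (j + 1) mod L}) ` {..<L}" by auto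
next
  fix e assume "e \<in> (\<lambda>j. {j, (j + 1) mod L}) ` {..<L}"
  then obtain j where "j < L" "e = {j, (j + 1) mod L}" by auto
  then obtain a b where "(a, b) \<in> band {0, L} L" "e = {zigzag L a, zigzag L b}"
    using zigzag_cycle_edge[OF assms] by metis
  then show "e \<in> (\<lambda>(a, b). {zigzag L a, zigzag L b}) ` band {0, L} L" by force
qed

definition band_graph :: "nat set \<Rightarrow> nat \<Rightarrow> nat set set" where
  "band_graph S n = (\<lambda>(a, b). {a, b}) ` band S n"

lemma band_graph_subset: "\<forall>e \<in> band_graph S n. e \<subseteq> {0..<n}"
  unfolding band_graph_def using band_less by fastforce

lemma image_band_graph: "(`) g ` band_graph S n = (\<lambda>(a, b). {g a, g b}) ` band S n"
  unfolding band_graph_def image_image by (intro image_cong refl) auto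

lemma inj_on_band_doubleton: "inj_on (\<lambda>(a, b). {a, b}) (band S n)"
  by (rule inj_onI) (auto simp: doubleton_eq_iff dest!: band_less(1))

lemma band_graph_edges_with:
  assumes "\<And>x y. P x y \<longleftrightarrow> P y x"
  shows "{e \<in> band_graph S n. \<exists>x y. e = {x, y} \<and> P (f x) (f y)} =
    (\<lambda>(a, b). {a, b}) ` {(a, b) \<in> band S n. P (f a) (f b)}"
proof (intro set_eqI iffI)
  fix e assume "e \<in> {e \<in> band_graph S n. \<exists>x y. e = {x, y} \<and> P (f x) (f y)}"
  then obtain a b x y where ab: "(a, b) \<in> band S n" "e = {a, b}" "e = {x, y}" "P (f x) (f y)"
    unfolding band_graph_def by auto
  then have "P (f a) (f b)" using assms by (auto simp: doubleton_eq_iff)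
  then show "e \<in> (\<lambda>(a, b). {a, b}) ` {(a, b) \<in> band S n. P (f a) (f b)}"
    using ab(1,2) by force
qed (auto simp: band_graph_def)

section \<open>Laying out a two-regular graph as a band graph\<close>

lemma bij_betw_cycle_layout:
  assumes "distinct cs" "bij_betw g {0..<n} V" "set cs \<inter> V = {}"
  shows "bij_betw (\<lambda>k. if k < length cs then cs ! zigzag (length cs) k else g (k - length cs))
    {0..<length cs + n} (set cs \<union> V)" (is "bij_betw ?h _ _")
proof -
  let ?L = "length cs"
  have "bij_betw ((!) cs \<circ> zigzag ?L) {..<?L} (set cs)"
    using bij_betw_trans[OF zigzag_bij bij_betw_nth[OF assms(1) refl refl]] .
  then have cycle: "bij_betw ?h {..<?L} (set cs)"
    by (rule bij_betw_cong[THEN iffD1, rotated]) simp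
  have "bij_betw (\<lambda>k. k - ?L) {?L..<?L + n} {0..<n}"
    by (rule bij_betw_byWitness[where f' = "\<lambda>k. k + ?L"]) auto
  then have "bij_betw (g \<circ> (\<lambda>k. k - ?L)) {?L..<?L + n} V"
    using bij_betw_trans assms(2) by blast
  then have rest: "bij_betw ?h {?L..<?L + n} V"
    by (rule bij_betw_cong[THEN iffD1, rotated]) simp
  have "{0..<?L + n} = {..<?L} \<union> {?L..<?L + n}" by auto
  then show ?thesis
    using bij_betw_combine[OF cycle rest assms(3)] by simp
qed

lemma cycle_layout_edges:
  fixes cs :: "'a list" and g :: "nat \<Rightarrow> 'a"
  assumes "3 \<le> length cs" "0 \<in> S" "1 \<notin> S"
  defines "h \<equiv> \<lambda>k. if k < length cs then cs ! zigzag (length cs) k else g (k - length cs)"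
  shows "(\<lambda>(a, b). {h a, h b}) ` band (insert 0 ((+) (length cs) ` S)) (length cs + n) =
    (\<lambda>k. {cs ! k, cs ! ((k + 1) mod length cs)}) ` {..<length cs} \<union> (\<lambda>(a, b). {g a, g b}) ` band S n"
proof -
  let ?L = "length cs"
  have "(\<lambda>(a, b). {h a, h b}) ` band {0, ?L} ?L =
      (`) ((!) cs) ` ((\<lambda>(a, b). {zigzag ?L a, zigzag ?L b}) ` band {0, ?L} ?L)"
    unfolding image_image
  proof (intro image_cong refl)
    fix x assume "x \<in> band {0, ?L} ?L"
    moreover obtain a b where "x = (a, b)" by fastforce
    ultimately have "a < ?L" "b < ?L" "x = (a, b)" using band_less[of a b "{0, ?L}" ?L] by auto
    then show "(case x of (a, b) \<Rightarrow> {h a, h b}) = (!) cs ` (case x of (a, b) \<Rightarrow> {zigzag ?L a, zigzag ?L b})"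
      by (simp add: h_def)
  qed
  also have "\<dots> = (\<lambda>k. {cs ! k, cs ! ((k + 1) mod ?L)}) ` {..<?L}"
    unfolding zigzag_band[OF assms(1)] image_image by simp
  finally have cycle: "(\<lambda>(a, b). {h a, h b}) ` band {0, ?L} ?L =
      (\<lambda>k. {cs ! k, cs ! ((k + 1) mod ?L)}) ` {..<?L}" .
  have rest: "(\<lambda>(a, b). {h a, h b}) ` (\<lambda>(a, b). (?L + a, ?L + b)) ` band S n =
      (\<lambda>(a, b). {g a, g b}) ` band S n"
    unfolding image_image by (intro image_cong refl) (auto simp: h_def)
  have "2 \<le> ?L" using assms(1) by simp
  show ?thesis
    unfolding band_prepend_block[OF assms(2,3) \<open>2 \<le> ?L\<close>] image_Un cycle rest ..
qed

definition band_layout :: "'a set \<Rightarrow> 'a set set \<Rightarrow> nat \<Rightarrow> (nat \<Rightarrow> 'a) \<Rightarrow> nat set \<Rightarrow> bool" where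
  "band_layout V E d g S \<longleftrightarrow> bij_betw g {0..<card V} V \<and> 0 \<in> S \<and> card V \<in> S \<and> spread d S \<and>
     E = (\<lambda>(a, b). {g a, g b}) ` band S (card V)"

lemma band_layout_add_cycle:
  assumes tr: "two_regular V E" and cs: "is_cycle V E cs" and "d \<le> length cs" "2 \<le> d"
    and layout: "band_layout (V - set cs) {e \<in> E. e \<inter> set cs = {}} d g S"
  shows "\<exists>g S. band_layout V E d g S"
proof -
  have L: "3 \<le> length cs" "distinct cs" "set cs \<subseteq> V" using cs unfolding is_cycle_def by auto
  have "finite V" using tr unfolding two_regular_def simple_graph_def by auto
  then have card: "card V = length cs + card (V - set cs)"
    using card_Diff_subset[OF finite_subset[OF L(3)] L(3)] card_mono[OF _ L(3)] distinct_card[OF L(2)]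
    by simp
  have g: "bij_betw g {0..<card (V - set cs)} (V - set cs)"
    and S: "0 \<in> S" "card (V - set cs) \<in> S" "spread d S"
    and E': "{e \<in> E. e \<inter> set cs = {}} = (\<lambda>(a, b). {g a, g b}) ` band S (card (V - set cs))"
    using layout unfolding band_layout_def by auto
  have "1 \<notin> S" using S(1,3) assms(4) unfolding spread_def by fastforce
  define h where "h k = (if k < length cs then cs ! zigzag (length cs) k else g (k - length cs))" for k
  have "E = {e \<in> E. e \<inter> set cs \<noteq> {}} \<union> {e \<in> E. e \<inter> set cs = {}}" by auto
  also have "\<dots> = (\<lambda>(a, b). {h a, h b}) ` band (insert 0 ((+) (length cs) ` S)) (card V)"
    unfolding card h_def cycle_layout_edges[OF L(1) S(1) \<open>1 \<notin> S\<close>] edges_meeting_cycle[OF tr cs] E' ..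
  finally have "E = (\<lambda>(a, b). {h a, h b}) ` band (insert 0 ((+) (length cs) ` S)) (card V)" .
  moreover have "bij_betw h {0..<card V} V"
    using bij_betw_cycle_layout[OF L(2) g] L(3) unfolding card h_def by (simp add: Un_absorb1 Int_Diff)
  moreover have "spread d (insert 0 ((+) (length cs) ` S))"
    using spread_insert_shift[OF S(3) assms(3)] .
  ultimately show ?thesis
    using S(2) card unfolding band_layout_def by blast
qed

lemma two_regular_band_layout:
  assumes "two_regular V E" "\<forall>cs. is_cycle V E cs \<longrightarrow> d \<le> length cs" "2 \<le> d"
  shows "\<exists>g S. band_layout V E d g S"
  using assms(1,2)
proof (induction "card V" arbitrary: V E rule: less_induct)
  case less
  have tr: "two_regular V E" and girth: "\<forall>cs. is_cycle V E cs \<longrightarrow> d \<le> length cs"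
    using less.prems by auto
  show ?case
  proof (cases "V = {}")
    case True
    then have "E = {}" using tr unfolding two_regular_def simple_graph_def by blast
    moreover have "band {0} 0 = {}" "spread d {0}" unfolding band_def spread_def by auto
    ultimately have "band_layout V E d (\<lambda>_. undefined) {0}"
      using True unfolding band_layout_def by (simp add: bij_betw_def)
    then show ?thesis by blast
  next
    case False
    obtain cs where cs: "is_cycle V E cs" using two_regular_has_cycle[OF tr False] .
    have finV: "finite V" using tr unfolding two_regular_def simple_graph_def by auto
    have "0 < length cs" "set cs \<subseteq> V" using cs unfolding is_cycle_def by auto
    then have "cs ! 0 \<in> set cs" "set cs \<subseteq> V" using nth_mem by blast+
    then have "V - set cs \<subset> V" by blast
    then have "card (V - set cs) < card V" using psubset_card_mono[OF finV] by blast
    moreover have "\<forall>cs'. is_cycle (V - set cs) {e \<in> E. e \<inter> set cs = {}} cs' \<longrightarrow> d \<le> length cs'"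
      using girth unfolding is_cycle_def by auto
    ultimately obtain g S where "band_layout (V - set cs) {e \<in> E. e \<inter> set cs = {}} d g S"
      using less.hyps two_regular_remove_cycle[OF tr cs] by blast
    then show ?thesis
      using band_layout_add_cycle[OF tr cs _ assms(3)] girth cs by blast
  qed
qed

section \<open>Layered labellings\<close>

definition layered_labelling :: "'a set \<Rightarrow> 'a set set \<Rightarrow> nat \<Rightarrow> (nat \<Rightarrow> nat) \<Rightarrow> ('a \<Rightarrow> nat) \<Rightarrow> bool"
  where
  "layered_labelling V E t ns f \<longleftrightarrow>
     (\<forall>x\<in>V. f x \<in> {1..t}) \<and>
     (\<forall>i\<in>{1..t}. card {x\<in>V. f x = i} = ns i) \<and>
     (\<forall>x y. {x, y} \<in> E \<longrightarrow> \<bar>int (f x) - int (f y)\<bar> \<le> 1) \<and>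
     induced_matching E {e\<in>E. \<exists>x y. e = {x, y} \<and> f x \<noteq> f y} \<and>
     (\<forall>i\<in>{1..<t}. card {e\<in>E. \<exists>x y. e = {x, y} \<and> {f x, f y} = {i, i + 1}} = 4)"

lemma image_eq_doubleton:
  assumes g: "inj_on g A" and "e \<subseteq> A" "g ` e = {x, y}"
  shows "e = {the_inv_into A g x, the_inv_into A g y}"
proof -
  have "x \<in> g ` e" "y \<in> g ` e" using assms(3) by auto
  then obtain a b where ab: "a \<in> e" "x = g a" "b \<in> e" "y = g b" by blast
  then have "g ` e = g ` {a, b}" using assms(3) by simp
  moreover have "{a, b} \<subseteq> A" using ab(1,3) assms(2) by auto
  ultimately have "e = {a, b}" using inj_on_image_eq_iff[OF g assms(2)] by blast
  moreover have "the_inv_into A g x = a" "the_inv_into A g y = b"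
    using the_inv_into_f_f[OF g] assms(2) ab by auto
  ultimately show ?thesis by simp
qed

lemma induced_matching_image:
  assumes g: "inj_on g A" and E0: "\<forall>e\<in>E0. e \<subseteq> A" and M0: "induced_matching E0 M0"
  shows "induced_matching ((`) g ` E0) ((`) g ` M0)"
  unfolding induced_matching_def
proof (rule conjI)
  show "(`) g ` M0 \<subseteq> (`) g ` E0" using M0 unfolding induced_matching_def by blast
next
  show "\<forall>e\<in>(`) g ` M0. \<forall>e'\<in>(`) g ` M0. e \<noteq> e' \<longrightarrow>
      e \<inter> e' = {} \<and> (\<forall>x\<in>e. \<forall>y\<in>e'. {x, y} \<notin> (`) g ` E0)"
  proof (intro ballI impI)
    fix e e' assume e: "e \<in> (`) g ` M0" and e': "e' \<in> (`) g ` M0" and "e \<noteq> e'"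
    obtain e0 where e0: "e0 \<in> M0" "e = g ` e0" using e by blast
    obtain e0' where e0': "e0' \<in> M0" "e' = g ` e0'" using e' by blast
    have "e0 \<noteq> e0'" using \<open>e \<noteq> e'\<close> e0(2) e0'(2) by blast
    have sub: "e0 \<subseteq> A" "e0' \<subseteq> A" using e0(1) e0'(1) E0 M0 unfolding induced_matching_def by auto
    have sep: "e0 \<inter> e0' = {}" "\<And>a b. a \<in> e0 \<Longrightarrow> b \<in> e0' \<Longrightarrow> {a, b} \<notin> E0"
      using M0 e0(1) e0'(1) \<open>e0 \<noteq> e0'\<close> unfolding induced_matching_def by blast+
    have "e \<inter> e' = {}"
      using inj_on_image_Int[OF g sub] sep(1) unfolding e0(2) e0'(2) by simp
    moreover have "{x, y} \<notin> (`) g ` E0" if "x \<in> e" "y \<in> e'" for x y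
    proof
      assume "{x, y} \<in> (`) g ` E0"
      then obtain e1 where e1: "e1 \<in> E0" "g ` e1 = {x, y}" by auto
      have "e1 = {the_inv_into A g x, the_inv_into A g y}"
        using image_eq_doubleton[OF g _ e1(2)] E0 e1(1) by blast
      moreover have "the_inv_into A g x \<in> e0" "the_inv_into A g y \<in> e0'"
        using that the_inv_into_f_f[OF g] sub unfolding e0(2) e0'(2) by auto
      ultimately show False using sep(2) e1(1) by blast
    qed
    ultimately show "e \<inter> e' = {} \<and> (\<forall>x\<in>e. \<forall>y\<in>e'. {x, y} \<notin> (`) g ` E0)" by blast
  qed
qed

lemma image_edges_with:
  assumes g: "inj_on g A" and E0: "\<forall>e\<in>E0. e \<subseteq> A"
  shows "{e \<in> (`) g ` E0. \<exists>x y. e = {x, y} \<and> P (f (the_inv_into A g x)) (f (the_inv_into A g y))} =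
    (`) g ` {e \<in> E0. \<exists>a b. e = {a, b} \<and> P (f a) (f b)}"
proof (intro set_eqI iffI)
  fix e assume "e \<in> {e \<in> (`) g ` E0. \<exists>x y. e = {x, y} \<and> P (f (the_inv_into A g x)) (f (the_inv_into A g y))}"
  then obtain e0 x y where e0: "e0 \<in> E0" "e = g ` e0" "g ` e0 = {x, y}"
    and P: "P (f (the_inv_into A g x)) (f (the_inv_into A g y))" by auto
  have "e0 = {the_inv_into A g x, the_inv_into A g y}"
    using image_eq_doubleton[OF g _ e0(3)] E0 e0(1) by blast
  then have "e0 \<in> {e \<in> E0. \<exists>a b. e = {a, b} \<and> P (f a) (f b)}"
    using e0(1) P by blast
  then show "e \<in> (`) g ` {e \<in> E0. \<exists>a b. e = {a, b} \<and> P (f a) (f b)}"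
    using e0(2) by (rule rev_image_eqI)
next
  fix e assume "e \<in> (`) g ` {e \<in> E0. \<exists>a b. e = {a, b} \<and> P (f a) (f b)}"
  then obtain a b where ab: "{a, b} \<in> E0" "e = {g a, g b}" "P (f a) (f b)" by auto
  then have "the_inv_into A g (g a) = a" "the_inv_into A g (g b) = b"
    using E0 the_inv_into_f_f[OF g] by auto
  then have "P (f (the_inv_into A g (g a))) (f (the_inv_into A g (g b)))" using ab(3) by simp
  then have "\<exists>x y. e = {x, y} \<and> P (f (the_inv_into A g x)) (f (the_inv_into A g y))"
    using ab(2) by blast
  moreover have "e \<in> (`) g ` E0" using rev_image_eqI[OF ab(1), of e "(`) g"] ab(2) by simp
  ultimately show
    "e \<in> {e \<in> (`) g ` E0. \<exists>x y. e = {x, y} \<and> P (f (the_inv_into A g x)) (f (the_inv_into A g y))}"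
    by simp
qed

lemma card_image_edges_with:
  assumes g: "inj_on g A" and E0: "\<forall>e\<in>E0. e \<subseteq> A"
  shows "card {e \<in> (`) g ` E0. \<exists>x y. e = {x, y} \<and> P (f (the_inv_into A g x)) (f (the_inv_into A g y))} =
    card {e \<in> E0. \<exists>a b. e = {a, b} \<and> P (f a) (f b)}"
proof -
  have "inj_on ((`) g) {e \<in> E0. \<exists>a b. e = {a, b} \<and> P (f a) (f b)}"
    by (rule inj_on_image, rule inj_on_subset[OF g]) (use E0 in auto)
  then show ?thesis
    unfolding image_edges_with[OF g E0, of P f] by (rule card_image)
qed

lemma layered_labelling_image:
  assumes g: "bij_betw g A V" and E0: "\<forall>e\<in>E0. e \<subseteq> A" and lab: "layered_labelling A E0 t ns f"
  shows "layered_labelling V ((`) g ` E0) t ns (f \<circ> the_inv_into A g)"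
proof -
  let ?h = "the_inv_into A g"
  have inj: "inj_on g A" and V: "V = g ` A" using g unfolding bij_betw_def by auto
  have h: "?h (g a) = a" if "a \<in> A" for a using the_inv_into_f_f[OF inj that] .
  have edges: "{?h x, ?h y} \<in> E0" if xy: "{x, y} \<in> (`) g ` E0" for x y
  proof -
    obtain e1 where "e1 \<in> E0" "g ` e1 = {x, y}" using xy by auto
    then show ?thesis using image_eq_doubleton[OF inj, of e1 x y] E0 by auto
  qed
  have cards: "card {x \<in> V. f (?h x) = i} = card {a \<in> A. f a = i}" for i
  proof -
    have "{x \<in> V. f (?h x) = i} = g ` {a \<in> A. f a = i}" unfolding V using h by auto
    then show ?thesis using card_image[OF inj_on_subset[OF inj]] by simp
  qed
  show ?thesis
    unfolding layered_labelling_def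
  proof (intro conjI ballI allI impI)
    fix x assume "x \<in> V"
    then show "(f \<circ> ?h) x \<in> {1..t}"
      using lab h unfolding V layered_labelling_def by auto
  next
    fix i assume "i \<in> {1..t}"
    then show "card {x \<in> V. (f \<circ> ?h) x = i} = ns i"
      using lab cards unfolding layered_labelling_def by simp
  next
    fix x y assume "{x, y} \<in> (`) g ` E0"
    then show "\<bar>int ((f \<circ> ?h) x) - int ((f \<circ> ?h) y)\<bar> \<le> 1"
      using lab edges unfolding layered_labelling_def by simp
  next
    have "{e \<in> (`) g ` E0. \<exists>x y. e = {x, y} \<and> (f \<circ> ?h) x \<noteq> (f \<circ> ?h) y} =
        (`) g ` {e \<in> E0. \<exists>a b. e = {a, b} \<and> f a \<noteq> f b}"
      using image_edges_with[OF inj E0, where P = "\<lambda>a b. a \<noteq> b" and f = f] by simp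
    then show "induced_matching ((`) g ` E0) {e \<in> (`) g ` E0. \<exists>x y. e = {x, y} \<and> (f \<circ> ?h) x \<noteq> (f \<circ> ?h) y}"
      using induced_matching_image[OF inj E0] lab unfolding layered_labelling_def by simp
  next
    fix i assume "i \<in> {1..<t}"
    then show "card {e \<in> (`) g ` E0. \<exists>x y. e = {x, y} \<and> {(f \<circ> ?h) x, (f \<circ> ?h) y} = {i, i + 1}} = 4"
      using card_image_edges_with[OF inj E0, where P = "\<lambda>a b. {a, b} = {i, i + 1}" and f = f] lab
      unfolding layered_labelling_def by simp
  qed
qed

section \<open>The layered labelling of a band graph\<close>

locale band_levels =
  fixes S :: "nat set" and n t :: nat and ns :: "nat \<Rightarrow> nat"
  assumes zero_mem: "0 \<in> S" and n_mem: "n \<in> S" and boundaries_spread: "spread 15 S"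
    and sum_ns: "(\<Sum>i = 1..t. ns i) = n" and ns_ge: "\<forall>i\<in>{1..t}. 50 \<le> ns i"
begin

definition psum :: "nat \<Rightarrow> nat" where
  "psum k = (\<Sum>i = 1..k. ns i)"

text \<open>\<open>lcut k\<close> and \<open>rcut k\<close> are the cuts \<open>A\<^sub>k\<close> and \<open>D\<^sub>k\<close> of the construction, so level \<open>i\<close>
  occupies \<open>[lcut (i - 1), lcut i) \<union> [rcut i, rcut (i - 1))\<close>.\<close>
primrec lcut :: "nat \<Rightarrow> nat" where
  "lcut 0 = 0"
| "lcut (Suc k) = (SOME c. c \<in> {lcut k + 20, lcut k + 25, lcut k + 30} \<and>
     clean_cut S c \<and> clean_cut S (c + (n - psum (Suc k))))"

declare lcut.simps(2) [simp del]

definition rcut :: "nat \<Rightarrow> nat" where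
  "rcut k = lcut k + (n - psum k)"

definition core :: "nat \<Rightarrow> nat set" where
  "core k = (if k < t then {lcut k..<rcut k} else {})"

definition level :: "nat \<Rightarrow> nat" where
  "level p = 1 + card {k \<in> {1..<t}. p \<in> core k}"

lemma lcut_Suc:
  "lcut (Suc k) \<in> {lcut k + 20, lcut k + 25, lcut k + 30} \<and>
     clean_cut S (lcut (Suc k)) \<and> clean_cut S (rcut (Suc k))"
  unfolding lcut.simps(2) rcut_def
  by (rule someI_ex) (use clean_cut_choice[OF boundaries_spread order.refl] in blast)

lemma lcut_step: "lcut k + 20 \<le> lcut (Suc k)" "lcut (Suc k) \<le> lcut k + 30"
  using lcut_Suc[of k] by auto

lemma lcut_less: "j < j' \<Longrightarrow> lcut j + 20 \<le> lcut j'"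
proof (induction j')
  case (Suc j')
  then show ?case using lcut_step[of j'] by (cases "j < j'") (auto simp: less_Suc_eq)
qed simp

lemma lcut_mono: "j \<le> j' \<Longrightarrow> lcut j \<le> lcut j'"
  using lcut_less[of j j'] by (cases "j = j'") auto

lemma lcut_lower: "20 * k \<le> lcut k"
proof (induction k)
  case (Suc k)
  then show ?case using lcut_step(1)[of k] by simp
qed simp

lemma lcut_upper: "lcut k \<le> 30 * k"
proof (induction k)
  case (Suc k)
  then show ?case using lcut_step(2)[of k] by simp
qed simp

lemma psum_Suc: "psum (Suc k) = psum k + ns (Suc k)"
  unfolding psum_def by simp

lemma psum_ge: "k \<le> t \<Longrightarrow> 50 * k \<le> psum k"
proof (induction k)
  case (Suc k)
  then show ?case using ns_ge psum_Suc[of k] by force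
qed simp

lemma psum_le: "k \<le> t \<Longrightarrow> psum k \<le> n"
  unfolding psum_def sum_ns[symmetric] by (rule sum_mono2) auto

lemma psum_last: "psum t = n"
  unfolding psum_def using sum_ns .

lemma psum_less: "k < t \<Longrightarrow> psum k + 50 \<le> n"
  using ns_ge[rule_format, of "Suc k"] psum_le[of "Suc k"] psum_Suc[of k] by simp

lemma lcut_le_n: "k \<le> t \<Longrightarrow> lcut k \<le> n"
  using lcut_upper[of k] psum_ge[of k] psum_le[of k] by linarith

lemma lcut_rcut_gap: "k < t \<Longrightarrow> lcut k + 50 \<le> rcut k"
  unfolding rcut_def using psum_less[of k] by linarith

lemma rcut_le_n: "k \<le> t \<Longrightarrow> rcut k \<le> n"
  unfolding rcut_def using lcut_upper[of k] psum_ge[of k] psum_le[of k] by linarith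

lemma rcut_step: "Suc k < t \<Longrightarrow> rcut (Suc k) + 20 \<le> rcut k"
  unfolding rcut_def
  using psum_Suc[of k] psum_le[of "Suc k"] lcut_step(2)[of k] ns_ge[rule_format, of "Suc k"]
  by auto

lemma rcut_less: "j < j' \<Longrightarrow> j' < t \<Longrightarrow> rcut j' + 20 \<le> rcut j"
proof (induction j')
  case (Suc j')
  then show ?case using rcut_step[of j'] by (cases "j < j'") (auto simp: less_Suc_eq)
qed simp

lemma rcut_antimono: "j \<le> j' \<Longrightarrow> j' < t \<Longrightarrow> rcut j' \<le> rcut j"
  using rcut_less[of j j'] by (cases "j = j'") auto

lemma lcut_le_rcut:
  assumes "j < t" "j' < t"
  shows "lcut j + 50 \<le> rcut j'"
proof -
  have "j \<le> t - 1" "j' \<le> t - 1" "t - 1 < t" using assms by auto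
  then show ?thesis
    using lcut_mono[of j "t - 1"] rcut_antimono[of j' "t - 1"] lcut_rcut_gap[of "t - 1"] by linarith
qed

lemma lcut_rcut_clean: "1 \<le> j \<Longrightarrow> clean_cut S (lcut j) \<and> clean_cut S (rcut j)"
  using lcut_Suc[of "j - 1"] by simp

lemma core_antimono: "j \<le> j' \<Longrightarrow> core j' \<subseteq> core j"
  unfolding core_def using lcut_mono[of j j'] rcut_antimono[of j j'] by auto

lemma core_0: "core 0 = {0..<n}"
  using psum_last unfolding core_def rcut_def psum_def by auto

lemma level_eqI:
  assumes "1 \<le> i" "i \<le> t" "p \<in> core (i - 1)" "p \<notin> core i"
  shows "level p = i"
proof -
  have "{k \<in> {1..<t}. p \<in> core k} = {1..<i}"
  proof (intro set_eqI iffI)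
    fix k assume k: "k \<in> {k \<in> {1..<t}. p \<in> core k}"
    then have "k < i" using core_antimono[of i k] assms(4) by (cases "k < i") auto
    then show "k \<in> {1..<i}" using k by auto
  next
    fix k assume "k \<in> {1..<i}"
    then have "k \<le> i - 1" by auto
    then show "k \<in> {k \<in> {1..<t}. p \<in> core k}"
      using core_antimono[of k "i - 1"] assms \<open>k \<in> {1..<i}\<close> by auto
  qed
  then show ?thesis unfolding level_def using assms(1) by simp
qed

lemma level_eq_iff:
  assumes "p < n" "1 \<le> i" "i \<le> t"
  shows "level p = i \<longleftrightarrow> p \<in> core (i - 1) - core i"
proof
  assume "level p = i"
  obtain k where k: "k < t" "p \<in> core k" "p \<notin> core (Suc k)"
    using ex_least_nat_less[of "\<lambda>k. p \<notin> core k" t] core_0 assms(1) unfolding core_def by auto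
  then have "level p = Suc k" using level_eqI[of "Suc k"] by simp
  then show "p \<in> core (i - 1) - core i" using k \<open>level p = i\<close> by auto
qed (use level_eqI assms in auto)

lemma level_below_lcut:
  assumes "j \<in> {1..<t}" "lcut j - 20 \<le> p" "p < lcut j"
  shows "level p = j"
proof -
  have "lcut (j - 1) + 20 \<le> lcut j" "rcut j \<le> rcut (j - 1)" "lcut j < rcut j" "lcut j \<le> n"
    using assms(1) lcut_less[of "j - 1" j] rcut_antimono[of "j - 1" j] lcut_rcut_gap[of j] lcut_le_n[of j]
    by auto
  then show ?thesis
    using assms level_eq_iff[of p j] unfolding core_def by auto
qed

lemma level_above_lcut:
  assumes "j \<in> {1..<t}" "lcut j \<le> p" "p < lcut j + 20"
  shows "level p = j + 1"
proof -
  have "lcut j + 50 \<le> rcut j" "Suc j < t \<Longrightarrow> lcut j + 20 \<le> lcut (Suc j)" "rcut j \<le> n"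
    using assms(1) lcut_rcut_gap[of j] lcut_step(1)[of j] rcut_le_n[of j] by auto
  then show ?thesis
    using assms level_eq_iff[of p "j + 1"] unfolding core_def by auto
qed

lemma level_below_rcut:
  assumes "j \<in> {1..<t}" "rcut j - 20 \<le> p" "p < rcut j"
  shows "level p = j + 1"
proof -
  have "lcut j + 50 \<le> rcut j" "Suc j < t \<Longrightarrow> rcut (Suc j) + 20 \<le> rcut j" "rcut j \<le> n"
    using assms(1) lcut_rcut_gap[of j] rcut_step[of j] rcut_le_n[of j] by auto
  then show ?thesis
    using assms level_eq_iff[of p "j + 1"] unfolding core_def by auto
qed

lemma level_above_rcut:
  assumes "j \<in> {1..<t}" "rcut j \<le> p" "p < rcut j + 20"
  shows "level p = j"
proof -
  have "lcut (j - 1) \<le> lcut j" "lcut j + 50 \<le> rcut j" "rcut j + 20 \<le> rcut (j - 1)" "rcut (j - 1) \<le> n"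
    using assms(1) lcut_mono[of "j - 1" j] lcut_rcut_gap[of j] rcut_less[of "j - 1" j] rcut_le_n[of "j - 1"]
    by auto
  then show ?thesis
    using assms level_eq_iff[of p j] unfolding core_def by auto
qed

lemma level_constant:
  assumes "a \<le> b" "\<forall>j\<in>{1..<t}. \<not> (a < lcut j \<and> lcut j \<le> b) \<and> \<not> (a < rcut j \<and> rcut j \<le> b)"
  shows "level a = level b"
proof -
  have "{k \<in> {1..<t}. a \<in> core k} = {k \<in> {1..<t}. b \<in> core k}"
    using assms unfolding core_def by fastforce
  then show ?thesis unfolding level_def by simp
qed

definition is_cut :: "nat \<Rightarrow> nat \<Rightarrow> bool" where
  "is_cut j c \<longleftrightarrow> j \<in> {1..<t} \<and> (c = lcut j \<or> c = rcut j)"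

lemma is_cut_clean:
  assumes "is_cut j c"
  shows "clean_cut S c" "c \<le> n" "20 \<le> c"
  using assms lcut_rcut_clean[of j] lcut_le_n[of j] rcut_le_n[of j] lcut_lower[of j] lcut_rcut_gap[of j]
  unfolding is_cut_def by auto

lemma band_crossing_level:
  assumes "(a, b) \<in> band S n" "level a \<noteq> level b"
  obtains j c where "is_cut j c" "(a, b) = (c - 2, c) \<or> (a, b) = (c - 1, c + 1)"
proof -
  obtain j c where "is_cut j c" "a < c" "c \<le> b"
    using level_constant[of a b] band_less(1)[OF assms(1)] assms(2) unfolding is_cut_def by force
  then show ?thesis
    using band_crossing_clean_cut[OF zero_mem n_mem is_cut_clean(1,2) assms(1)] that by blast
qed

lemma level_at_cut:
  assumes "is_cut j c" "(a, b) = (c - 2, c) \<or> (a, b) = (c - 1, c + 1)"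
  shows "{level a, level b} = {j, j + 1}"
proof -
  have j: "j \<in> {1..<t}" and c: "c = lcut j \<or> c = rcut j" and "20 \<le> c"
    using assms(1) is_cut_clean(3) unfolding is_cut_def by auto
  then have a: "c - 20 \<le> a" "a < c" and b: "c \<le> b" "b < c + 20"
    using assms(2) by auto
  from c show ?thesis
  proof
    assume "c = lcut j"
    then show ?thesis using level_below_lcut[OF j] level_above_lcut[OF j] a b by simp
  next
    assume "c = rcut j"
    then show ?thesis using level_below_rcut[OF j] level_above_rcut[OF j] a b by auto
  qed
qed

lemma cuts_apart:
  assumes "is_cut j c" "is_cut j' c'" "c \<noteq> c'"
  shows "c + 20 \<le> c' \<or> c' + 20 \<le> c"
proof -
  have "j < t" "j' < t" using assms unfolding is_cut_def by auto
  then show ?thesis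
    using assms lcut_less[of j j'] lcut_less[of j' j] rcut_less[of j j'] rcut_less[of j' j]
      lcut_le_rcut[of j j'] lcut_le_rcut[of j' j] unfolding is_cut_def
    by (cases j j' rule: linorder_cases) auto
qed

lemma level_range: "p < n \<Longrightarrow> level p \<in> {1..t}"
proof -
  assume "p < n"
  then have "t \<noteq> 0" using sum_ns by (cases t) auto
  moreover have "card {k \<in> {1..<t}. p \<in> core k} \<le> card {1..<t}"
    by (rule card_mono) auto
  ultimately show ?thesis unfolding level_def by auto
qed

lemma card_core: "card (core k) = (if k < t then n - psum k else 0)"
  unfolding core_def rcut_def by auto

lemma card_level:
  assumes "i \<in> {1..t}"
  shows "card {p \<in> {0..<n}. level p = i} = ns i"
proof -
  have i: "1 \<le> i" "i \<le> t" using assms by auto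
  have sub: "core i \<subseteq> core (i - 1)" "core (i - 1) \<subseteq> {0..<n}"
    using core_antimono[of "i - 1" i] core_antimono[of 0 "i - 1"] core_0 by auto
  have "{p \<in> {0..<n}. level p = i} = core (i - 1) - core i"
  proof (intro set_eqI iffI)
    fix p assume "p \<in> {p \<in> {0..<n}. level p = i}"
    then show "p \<in> core (i - 1) - core i" using level_eq_iff[of p i] i by simp
  next
    fix p assume p: "p \<in> core (i - 1) - core i"
    then show "p \<in> {p \<in> {0..<n}. level p = i}" using sub(2) level_eqI[OF i] by auto
  qed
  then have "card {p \<in> {0..<n}. level p = i} = card (core (i - 1)) - card (core i)"
    using sub(1) by (simp add: card_Diff_subset core_def)
  also have "\<dots> = ns i"
  proof (cases "i < t")
    case True
    then show ?thesis
      using psum_Suc[of "i - 1"] psum_le[of i] i unfolding card_core by (simp add: less_imp_diff_less)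
  next
    case False
    then show ?thesis
      using psum_Suc[of "i - 1"] psum_last i unfolding card_core by (simp add: less_imp_diff_less)
  qed
  finally show ?thesis .
qed

lemma band_level_diff:
  assumes "(a, b) \<in> band S n"
  shows "\<bar>int (level a) - int (level b)\<bar> \<le> 1"
proof (cases "level a = level b")
  case False
  then obtain j c where "is_cut j c" "(a, b) = (c - 2, c) \<or> (a, b) = (c - 1, c + 1)"
    using band_crossing_level[OF assms] by blast
  then have "{level a, level b} = {j, j + 1}" by (rule level_at_cut)
  then show ?thesis by (auto simp: doubleton_eq_iff)
qed simp

lemma crossing_edges_separated:
  assumes "(a, b) \<in> band S n" "level a \<noteq> level b" "(a', b') \<in> band S n" "level a' \<noteq> level b'"
    and "(a, b) \<noteq> (a', b')" "p \<in> {a, b}" "q \<in> {a', b'}"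
  shows "p \<noteq> q" "(p, q) \<notin> band S n"
proof -
  obtain j c where c: "is_cut j c" "(a, b) = (c - 2, c) \<or> (a, b) = (c - 1, c + 1)"
    using band_crossing_level[OF assms(1,2)] by blast
  obtain j' c' where c': "is_cut j' c'" "(a', b') = (c' - 2, c') \<or> (a', b') = (c' - 1, c' + 1)"
    using band_crossing_level[OF assms(3,4)] by blast
  have "p \<noteq> q \<and> (p, q) \<notin> band S n"
  proof (cases "c = c'")
    case True
    then have "p \<in> {c - 2, c} \<and> q \<in> {c - 1, c + 1} \<or> p \<in> {c - 1, c + 1} \<and> q \<in> {c - 2, c}"
      using c(2) c'(2) assms(5-7) by auto
    moreover have "c - 2 \<noteq> c - 1" "c \<noteq> c + 1" "3 \<le> c" using is_cut_clean(3)[OF c(1)] by auto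
    ultimately show ?thesis
      using band_at_clean_cut_separated[OF zero_mem n_mem is_cut_clean(1,2)[OF c(1)]] by auto
  next
    case False
    then have "p + 3 \<le> q \<or> q + 3 \<le> p"
      using cuts_apart[OF c(1) c'(1)] c(2) c'(2) assms(6,7) by auto
    then show ?thesis using band_less(1,2)[of p q S n] by auto
  qed
  then show "p \<noteq> q" "(p, q) \<notin> band S n" by auto
qed

lemma crossing_edges_at_level:
  assumes "i \<in> {1..<t}"
  shows "{(a, b) \<in> band S n. {level a, level b} = {i, i + 1}} =
    {(lcut i - 2, lcut i), (lcut i - 1, lcut i + 1), (rcut i - 2, rcut i), (rcut i - 1, rcut i + 1)}"
proof (intro set_eqI iffI)
  fix x assume "x \<in> {(a, b) \<in> band S n. {level a, level b} = {i, i + 1}}"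
  then obtain a b where ab: "x = (a, b)" "(a, b) \<in> band S n" "{level a, level b} = {i, i + 1}" by auto
  then have "level a \<noteq> level b" by (auto simp: doubleton_eq_iff)
  then obtain j c where c: "is_cut j c" "(a, b) = (c - 2, c) \<or> (a, b) = (c - 1, c + 1)"
    using band_crossing_level[OF ab(2)] by blast
  then have "j = i" using level_at_cut[OF c] ab(3) by (auto simp: doubleton_eq_iff)
  then show
    "x \<in> {(lcut i - 2, lcut i), (lcut i - 1, lcut i + 1), (rcut i - 2, rcut i), (rcut i - 1, rcut i + 1)}"
    using c ab(1) unfolding is_cut_def by auto
next
  fix x
  assume "x \<in> {(lcut i - 2, lcut i), (lcut i - 1, lcut i + 1), (rcut i - 2, rcut i), (rcut i - 1, rcut i + 1)}"
  then obtain c a b where c: "is_cut i c" "(a, b) = (c - 2, c) \<or> (a, b) = (c - 1, c + 1)" "x = (a, b)"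
    using assms unfolding is_cut_def by auto
  have "(a, b) \<in> band S n"
    using band_at_clean_cut(1,2)[OF zero_mem n_mem is_cut_clean(1,2)[OF c(1)]] c(2) by auto
  then show "x \<in> {(a, b) \<in> band S n. {level a, level b} = {i, i + 1}}"
    using level_at_cut[OF c(1,2)] c(3) by simp
qed

lemma distinct_crossing_edges:
  assumes "i \<in> {1..<t}"
  shows
    "card {(lcut i - 2, lcut i), (lcut i - 1, lcut i + 1), (rcut i - 2, rcut i), (rcut i - 1, rcut i + 1)} = 4"
  using assms lcut_lower[of i] lcut_rcut_gap[of i] by auto

lemma induced_matching_crossing:
  "induced_matching (band_graph S n) {e \<in> band_graph S n. \<exists>x y. e = {x, y} \<and> level x \<noteq> level y}"
proof -
  have crossing: "{e \<in> band_graph S n. \<exists>x y. e = {x, y} \<and> level x \<noteq> level y} =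
      (\<lambda>(a, b). {a, b}) ` {(a, b) \<in> band S n. level a \<noteq> level b}"
    by (rule band_graph_edges_with) auto
  have separated: "e \<inter> e' = {} \<and> (\<forall>x\<in>e. \<forall>y\<in>e'. {x, y} \<notin> band_graph S n)"
    if e: "e \<in> (\<lambda>(a, b). {a, b}) ` {(a, b) \<in> band S n. level a \<noteq> level b}"
      and e': "e' \<in> (\<lambda>(a, b). {a, b}) ` {(a, b) \<in> band S n. level a \<noteq> level b}"
      and "e \<noteq> e'" for e e'
  proof -
    obtain a b where ab: "e = {a, b}" "(a, b) \<in> band S n" "level a \<noteq> level b"
      using e by auto
    obtain a' b' where ab': "e' = {a', b'}" "(a', b') \<in> band S n" "level a' \<noteq> level b'"
      using e' by auto
    have "(a, b) \<noteq> (a', b')" using \<open>e \<noteq> e'\<close> ab(1) ab'(1) by auto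
    note sep = crossing_edges_separated[OF ab(2,3) ab'(2,3) \<open>(a, b) \<noteq> (a', b')\<close>]
      crossing_edges_separated[OF ab'(2,3) ab(2,3) \<open>(a, b) \<noteq> (a', b')\<close>[symmetric]]
    have "e \<inter> e' = {}"
      using sep(1) unfolding ab(1) ab'(1) by blast
    moreover have "{x, y} \<notin> band_graph S n" if "x \<in> e" "y \<in> e'" for x y
    proof
      assume "{x, y} \<in> band_graph S n"
      then obtain c d where "(c, d) \<in> band S n" "{x, y} = {c, d}" unfolding band_graph_def by auto
      then have "(x, y) \<in> band S n \<or> (y, x) \<in> band S n" by (auto simp: doubleton_eq_iff)
      then show False
        using sep(2)[of x y] sep(4)[of y x] that unfolding ab(1) ab'(1) by blast
    qed
    ultimately show ?thesis by blast
  qed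
  show ?thesis
    unfolding induced_matching_def crossing
  proof (rule conjI)
    show "(\<lambda>(a, b). {a, b}) ` {(a, b) \<in> band S n. level a \<noteq> level b} \<subseteq> band_graph S n"
      unfolding band_graph_def by auto
  qed (intro ballI impI separated)
qed

lemma layered_labelling_band: "layered_labelling {0..<n} (band_graph S n) t ns level"
  unfolding layered_labelling_def
proof (intro conjI ballI allI impI)
  fix x assume "x \<in> {0..<n}"
  then show "level x \<in> {1..t}" using level_range by simp
next
  fix i assume "i \<in> {1..t}"
  then show "card {x \<in> {0..<n}. level x = i} = ns i" by (rule card_level)
next
  fix x y assume "{x, y} \<in> band_graph S n"
  then obtain a b where "(a, b) \<in> band S n" "{x, y} = {a, b}" unfolding band_graph_def by auto
  then show "\<bar>int (level x) - int (level y)\<bar> \<le> 1"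
    using band_level_diff by (auto simp: doubleton_eq_iff abs_le_iff)
next
  show "induced_matching (band_graph S n) {e \<in> band_graph S n. \<exists>x y. e = {x, y} \<and> level x \<noteq> level y}"
    by (rule induced_matching_crossing)
next
  fix i assume i: "i \<in> {1..<t}"
  have "{e \<in> band_graph S n. \<exists>x y. e = {x, y} \<and> {level x, level y} = {i, i + 1}} =
      (\<lambda>(a, b). {a, b}) ` {(a, b) \<in> band S n. {level a, level b} = {i, i + 1}}"
    by (rule band_graph_edges_with) (simp add: insert_commute)
  moreover have "inj_on (\<lambda>(a, b). {a, b}) {(a, b) \<in> band S n. {level a, level b} = {i, i + 1}}"
    using inj_on_band_doubleton by (rule inj_on_subset) auto
  ultimately have "card {e \<in> band_graph S n. \<exists>x y. e = {x, y} \<and> {level x, level y} = {i, i + 1}} =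
      card {(a, b) \<in> band S n. {level a, level b} = {i, i + 1}}"
    by (simp add: card_image)
  then show "card {e \<in> band_graph S n. \<exists>x y. e = {x, y} \<and> {level x, level y} = {i, i + 1}} = 4"
    using crossing_edges_at_level[OF i] distinct_crossing_edges[OF i] by simp
qed

end

theorem lemma4p10:
  fixes V :: "'a set" and E :: "'a set set" and n t :: nat and ns :: "nat \<Rightarrow> nat"
  assumes "two_regular V E"
    and "card V = n"
    and "\<forall>cs. is_cycle V E cs \<longrightarrow> length cs \<ge> 30"
    and "(\<Sum>i = 1..t. ns i) = n"
    and "\<forall>i\<in>{1..t}. ns i \<ge> 50"
  shows "\<exists>f :: 'a \<Rightarrow> nat.
           (\<forall>x\<in>V. f x \<in> {1..t}) \<and>
           (\<forall>i\<in>{1..t}. card {x\<in>V. f x = i} = ns i) \<and>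
           (\<forall>x y. {x, y} \<in> E \<longrightarrow> \<bar>int (f x) - int (f y)\<bar> \<le> 1) \<and>
           induced_matching E {e\<in>E. \<exists>x y. e = {x, y} \<and> f x \<noteq> f y} \<and>
           (\<forall>i\<in>{1..<t}. card {e\<in>E. \<exists>x y. e = {x, y} \<and> {f x, f y} = {i, i + 1}} = 4)"
proof -
  obtain g S where "band_layout V E 30 g S"
    using two_regular_band_layout[OF assms(1,3)] by auto
  then have g: "bij_betw g {0..<n} V" and S: "0 \<in> S" "n \<in> S" "spread 30 S"
    and E: "E = (\<lambda>(a, b). {g a, g b}) ` band S n"
    using assms(2) unfolding band_layout_def by auto
  interpret band_levels S n t ns
    using S spread_mono[of 15 30 S] assms(4,5) by unfold_locales auto
  have "layered_labelling V E t ns (level \<circ> the_inv_into {0..<n} g)"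
    using layered_labelling_image[OF g band_graph_subset layered_labelling_band]
    unfolding image_band_graph E .
  then show ?thesis
    unfolding layered_labelling_def by blast
qed

end
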